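(* Let $X$ be a compact Hausdorff space, $\mathcal C=C(X)$ the real continuous functions on $X$ with the supremum norm, $\alpha\colon X\to X$ continuous, $\delta f=f\circ\alpha$, and $A\colon\mathcal C\to\mathcal C$ a transfer operator for $(\mathcal C,\delta)$. Let $\lambda(\varphi)=\lim_{n\to\infty}\frac1n\ln\|A_\varphi^n\mathbf 1\|$ where $A_\varphi f=A(e^\varphi f)$. Then for every linear functional $\mu$ on $\mathcal C$ that does not belong to $M_\delta(\mathcal C)$, \[ \inf_{\varphi\in\mathcal C}\bigl(\lambda(\varphi)-\mu[\varphi]\bigr)=-\infty. \]
   Context: A transfer operator for $(\mathcal C,\delta)$ is a positive linear operator $A\colon\mathcal C\to\mathcal C$ with $A((\delta f)g)=f\,Ag$ for all $f,g\in\mathcal C$. $\mathbf 1$ is the constant function $1$. $M_\delta(\mathcal C)$ is the set of positive linear functionals $\mu$ on $\mathcal C$ with $\mu[\mathbf 1]=1$ and $\mu[\delta f]=\mu[f]$ for all $f\in\mathcal C$. *)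

theory Defs
  imports "HOL-Analysis.Analysis"
begin

text \<open>The space C(X) of real continuous functions on the (compact Hausdorff) space X,
  where X is the universe of the type 'a.\<close>
definition cfun :: "('a::topological_space \<Rightarrow> real) set" where
  "cfun = {f. continuous_on UNIV f}"

definition supnorm :: "('a \<Rightarrow> real) \<Rightarrow> real" where
  "supnorm f = (SUP x. \<bar>f x\<bar>)"

definition one_fun :: "'a \<Rightarrow> real" where
  "one_fun = (\<lambda>x. 1)"

definition pos_linear_op :: "(('a::topological_space \<Rightarrow> real) \<Rightarrow> ('a \<Rightarrow> real)) \<Rightarrow> bool" where
  "pos_linear_op A \<longleftrightarrow>
     (\<forall>f\<in>cfun. A f \<in> cfun) \<and>
     (\<forall>f\<in>cfun. \<forall>g\<in>cfun. A (\<lambda>x. f x + g x) = (\<lambda>x. A f x + A g x)) \<and>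
     (\<forall>f\<in>cfun. \<forall>c::real. A (\<lambda>x. c * f x) = (\<lambda>x. c * A f x)) \<and>
     (\<forall>f\<in>cfun. (\<forall>x. f x \<ge> 0) \<longrightarrow> (\<forall>x. A f x \<ge> 0))"

definition transfer_operator :: "('a::topological_space \<Rightarrow> 'a) \<Rightarrow> (('a \<Rightarrow> real) \<Rightarrow> ('a \<Rightarrow> real)) \<Rightarrow> bool" where
  "transfer_operator \<alpha> A \<longleftrightarrow> pos_linear_op A \<and>
     (\<forall>f\<in>cfun. \<forall>g\<in>cfun. A (\<lambda>x. f (\<alpha> x) * g x) = (\<lambda>x. f x * A g x))"

definition linear_functional :: "(('a::topological_space \<Rightarrow> real) \<Rightarrow> real) \<Rightarrow> bool" where
  "linear_functional \<mu> \<longleftrightarrow>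
     (\<forall>f\<in>cfun. \<forall>g\<in>cfun. \<mu> (\<lambda>x. f x + g x) = \<mu> f + \<mu> g) \<and>
     (\<forall>f\<in>cfun. \<forall>c::real. \<mu> (\<lambda>x. c * f x) = c * \<mu> f)"

definition M_delta :: "('a::topological_space \<Rightarrow> 'a) \<Rightarrow> (('a \<Rightarrow> real) \<Rightarrow> real) set" where
  "M_delta \<alpha> = {\<mu>. linear_functional \<mu> \<and>
      (\<forall>f\<in>cfun. (\<forall>x. f x \<ge> 0) \<longrightarrow> \<mu> f \<ge> 0) \<and>
      \<mu> one_fun = 1 \<and>
      (\<forall>f\<in>cfun. \<mu> (\<lambda>x. f (\<alpha> x)) = \<mu> f)}"

definition weighted_op :: "(('a \<Rightarrow> real) \<Rightarrow> ('a \<Rightarrow> real)) \<Rightarrow> ('a \<Rightarrow> real) \<Rightarrow> ('a \<Rightarrow> real) \<Rightarrow> ('a \<Rightarrow> real)" where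
  "weighted_op A \<phi> f = A (\<lambda>x. exp (\<phi> x) * f x)"

definition eln :: "real \<Rightarrow> ereal" where
  "eln t = (if t \<le> 0 then -\<infinity> else ereal (ln t))"

definition spec_exp :: "(('a \<Rightarrow> real) \<Rightarrow> ('a \<Rightarrow> real)) \<Rightarrow> ('a \<Rightarrow> real) \<Rightarrow> ereal" where
  "spec_exp A \<phi> = lim (\<lambda>n. eln (supnorm ((weighted_op A \<phi> ^^ n) one_fun)) / ereal (real n))"

end

theory Submission
  imports Defs
begin

text \<open>
  By Fekete's lemma for the subadditive sequence \<open>ln \<parallel>A\<^sub>\<phi>\<^sup>n 1\<parallel>\<close>, \<open>\<lambda>(\<phi>)\<close> is the
  infimum of \<open>(1/n) ln \<parallel>A\<^sub>\<phi>\<^sup>n 1\<parallel>\<close>, so a single \<open>n\<close> already bounds it from above.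
  A linear \<open>\<mu>\<close> outside \<open>M\<^sub>\<delta>\<close> fails positivity, normalisation or \<open>\<delta>\<close>-invariance, and
  in each case a one-parameter family of weights makes \<open>\<mu>[\<phi>]\<close> arbitrarily large while
  \<open>\<lambda>(\<phi>)\<close> stays controlled: \<open>\<phi> = -t f\<close> with \<open>f \<ge> 0\<close>, \<open>\<mu>[f] < 0\<close> (then
  \<open>A\<^sub>\<phi> 1 \<le> A 1\<close>); a constant \<open>\<phi> = c\<close> (then \<open>\<lambda>(\<phi>) \<le> c + ln \<parallel>A 1\<parallel>\<close> against
  \<open>\<mu>[\<phi>] = c \<mu>[1]\<close>); and a coboundary \<open>\<phi> = \<delta>g - g\<close> with \<open>g = t f\<close>, for which the
  transfer identity gives \<open>A\<^sub>\<phi>\<^sup>n (e\<^sup>g h) = e\<^sup>g A\<^sup>n h\<close>, hence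
  \<open>\<parallel>A\<^sub>\<phi>\<^sup>n 1\<parallel> \<le> exp (2 \<parallel>g\<parallel>) \<parallel>A 1\<parallel>\<^sup>n\<close> and \<open>\<lambda>(\<phi>) \<le> ln \<parallel>A 1\<parallel>\<close>.
\<close>

lemma subadditive_le_linear:
  fixes b :: "nat \<Rightarrow> real"
  assumes sub: "\<And>m n. b (m + n) \<le> b m + b n" and m: "m \<ge> 1"
  obtains C where "\<And>n. b n \<le> real n * (b m / real m) + C"
proof
  define x where "x = b m / real m"
  fix n :: nat
  have multiple: "b (q * m + r) \<le> real q * b m + b r" for q r
  proof (induction q)
    case 0
    then show ?case by simp
  next
    case (Suc q)
    have "b (Suc q * m + r) = b (m + (q * m + r))" by (simp add: algebra_simps)
    also have "\<dots> \<le> b m + b (q * m + r)" by (rule sub)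
    finally show ?case using Suc by (simp add: algebra_simps)
  qed
  define q where "q = n div m"
  define r where "r = n mod m"
  have n: "n = q * m + r" and r: "r < m" using m by (simp_all add: q_def r_def)
  have "real q * b m = real (q * m) * x" using m by (simp add: x_def)
  also have "\<dots> \<le> real n * x + real m * \<bar>x\<bar>"
  proof -
    have "\<bar>real (q * m) - real n\<bar> \<le> real m" using n r by simp
    then have "(real (q * m) - real n) * x \<le> real m * \<bar>x\<bar>"
      by (metis abs_ge_self abs_mult abs_of_nat mult_right_mono abs_ge_zero order_trans)
    then show ?thesis by (simp add: algebra_simps)
  qed
  finally have "b n \<le> real n * x + real m * \<bar>x\<bar> + b r" using multiple[of q r] n by simp
  also have "b r \<le> (\<Sum>r<m. \<bar>b r\<bar>)"
    using r by (intro order_trans[OF abs_ge_self member_le_sum[where f = "\<lambda>r. \<bar>b r\<bar>"]]) auto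
  finally show "b n \<le> real n * (b m / real m) + (real m * \<bar>b m / real m\<bar> + (\<Sum>r<m. \<bar>b r\<bar>))"
    by (simp add: x_def)
qed

lemma fekete:
  fixes b :: "nat \<Rightarrow> real"
  assumes sub: "\<And>m n. b (m + n) \<le> b m + b n"
  shows "(\<lambda>n. ereal (b n / real n)) \<longlonglongrightarrow> (INF n\<in>{1..}. ereal (b n / real n))"
proof (rule order_tendsto_iff[THEN iffD2], intro conjI allI impI)
  let ?L = "INF n\<in>{1..}. ereal (b n / real n)"
  fix a assume "a < ?L"
  then show "\<forall>\<^sub>F n in sequentially. a < ereal (b n / real n)"
    unfolding eventually_sequentially
    by (intro exI[of _ 1] allI impI) (auto intro: less_le_trans INF_lower)
next
  let ?L = "INF n\<in>{1..}. ereal (b n / real n)"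
  fix a assume "?L < a"
  then obtain m where m: "m \<ge> 1" "ereal (b m / real m) < a"
    by (auto simp: INF_less_iff)
  obtain C where C: "\<And>n. b n \<le> real n * (b m / real m) + C"
    using subadditive_le_linear[OF sub m(1)] by blast
  have "(\<lambda>n. ereal (b m / real m + C / real n)) \<longlonglongrightarrow> ereal (b m / real m)"
    by (intro tendsto_intros lim_const_over_n[THEN tendsto_add[OF tendsto_const], simplified])
  then have "\<forall>\<^sub>F n in sequentially. ereal (b m / real m + C / real n) < a"
    using m(2) by (rule order_tendstoD)
  moreover have "\<forall>\<^sub>F n in sequentially. b n / real n \<le> b m / real m + C / real n"
    unfolding eventually_sequentially
    by (intro exI[of _ 1] allI impI) (use C in \<open>simp add: divide_simps mult.commute\<close>)
  ultimately show "\<forall>\<^sub>F n in sequentially. ereal (b n / real n) < a"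
    by eventually_elim (erule le_less_trans[rotated], simp)
qed

lemma bdd_above_abs_cfun:
  assumes "compact (UNIV :: 'a::topological_space set)" and "(f :: 'a \<Rightarrow> real) \<in> cfun"
  shows "bdd_above (range (\<lambda>x. \<bar>f x\<bar>))"
proof -
  have "bounded (range f)"
    using assms by (intro compact_imp_bounded compact_continuous_image) (auto simp: cfun_def)
  then show ?thesis by (auto simp: bounded_iff bdd_above_def)
qed

lemma abs_le_supnorm:
  assumes "compact (UNIV :: 'a::topological_space set)" and "(f :: 'a \<Rightarrow> real) \<in> cfun"
  shows "\<bar>f x\<bar> \<le> supnorm f"
  unfolding supnorm_def by (rule cSUP_upper[OF _ bdd_above_abs_cfun[OF assms]]) auto

lemma supnorm_nonneg:
  assumes "compact (UNIV :: 'a::topological_space set)" and "(f :: 'a \<Rightarrow> real) \<in> cfun"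
  shows "0 \<le> supnorm f"
  using abs_le_supnorm[OF assms] abs_ge_zero order_trans by blast

lemma supnorm_le:
  assumes "\<And>x. \<bar>f x\<bar> \<le> c"
  shows "supnorm f \<le> c"
  unfolding supnorm_def by (rule cSUP_least) (use assms in auto)

lemma one_fun_cfun: "one_fun \<in> cfun"
  by (simp add: cfun_def one_fun_def)

lemma pos_linear_op_cfun: "pos_linear_op B \<Longrightarrow> f \<in> cfun \<Longrightarrow> B f \<in> cfun"
  by (simp add: pos_linear_op_def)

lemma pos_linear_op_add:
  "pos_linear_op B \<Longrightarrow> f \<in> cfun \<Longrightarrow> g \<in> cfun \<Longrightarrow> B (\<lambda>x. f x + g x) = (\<lambda>x. B f x + B g x)"
  by (simp add: pos_linear_op_def)

lemma pos_linear_op_scale: "pos_linear_op B \<Longrightarrow> f \<in> cfun \<Longrightarrow> B (\<lambda>x. c * f x) = (\<lambda>x. c * B f x)"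
  by (simp add: pos_linear_op_def)

lemma pos_linear_op_nonneg: "pos_linear_op B \<Longrightarrow> f \<in> cfun \<Longrightarrow> (\<And>x. 0 \<le> f x) \<Longrightarrow> 0 \<le> B f x"
  by (simp add: pos_linear_op_def)

lemma pos_linear_op_mono:
  assumes B: "pos_linear_op B" and f: "f \<in> cfun" and g: "g \<in> cfun" and le: "\<And>x. f x \<le> g x"
  shows "B f x \<le> B g x"
proof -
  have d: "(\<lambda>x. g x - f x) \<in> cfun" using f g by (auto simp: cfun_def intro!: continuous_intros)
  have "B g = B (\<lambda>x. f x + (g x - f x))" by simp
  also have "\<dots> = (\<lambda>x. B f x + B (\<lambda>x. g x - f x) x)" by (rule pos_linear_op_add[OF B f d])
  finally show ?thesis using pos_linear_op_nonneg[OF B d, of x] le by (simp add: fun_eq_iff)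
qed

lemma pos_linear_op_funpow:
  assumes "pos_linear_op B"
  shows "pos_linear_op (B ^^ n)"
proof (induction n)
  case 0
  then show ?case by (simp add: pos_linear_op_def)
next
  case (Suc n)
  then show ?case
    using assms unfolding pos_linear_op_def funpow.simps o_def by simp
qed

lemma pos_linear_op_weighted_op:
  assumes A: "pos_linear_op A" and \<phi>: "\<phi> \<in> cfun"
  shows "pos_linear_op (weighted_op A \<phi>)"
proof -
  have weighted: "(\<lambda>x. exp (\<phi> x) * f x) \<in> cfun" if "f \<in> cfun" for f
    using that \<phi> by (auto simp: cfun_def intro!: continuous_intros)
  have add: "A (\<lambda>x. exp (\<phi> x) * (f x + g x))
      = (\<lambda>x. A (\<lambda>x. exp (\<phi> x) * f x) x + A (\<lambda>x. exp (\<phi> x) * g x) x)"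
    if "f \<in> cfun" "g \<in> cfun" for f g
    using pos_linear_op_add[OF A weighted[OF that(1)] weighted[OF that(2)]]
    by (simp add: distrib_left)
  have scale: "A (\<lambda>x. exp (\<phi> x) * (c * f x)) = (\<lambda>x. c * A (\<lambda>x. exp (\<phi> x) * f x) x)"
    if "f \<in> cfun" for f c
    using pos_linear_op_scale[OF A weighted[OF that], of c] by (simp add: mult.left_commute)
  show ?thesis
    unfolding pos_linear_op_def weighted_op_def
    using A add scale weighted by (auto simp: pos_linear_op_def)
qed

lemma funpow_one_fun_cfun: "pos_linear_op B \<Longrightarrow> (B ^^ n) one_fun \<in> cfun"
  using pos_linear_op_funpow pos_linear_op_cfun one_fun_cfun by blast

lemma funpow_one_fun_nonneg: "pos_linear_op B \<Longrightarrow> 0 \<le> (B ^^ n) one_fun x"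
  by (rule pos_linear_op_nonneg[OF pos_linear_op_funpow one_fun_cfun]) (simp_all add: one_fun_def)

lemma supnorm_funpow_add_le:
  assumes K: "compact (UNIV :: 'a::topological_space set)"
    and B: "pos_linear_op (B :: ('a \<Rightarrow> real) \<Rightarrow> ('a \<Rightarrow> real))"
  shows "supnorm ((B ^^ (m + n)) one_fun) \<le> supnorm ((B ^^ m) one_fun) * supnorm ((B ^^ n) one_fun)"
proof (rule supnorm_le)
  fix x
  let ?h = "(B ^^ n) one_fun"
  let ?c = "supnorm ?h"
  have h: "?h \<in> cfun" by (rule funpow_one_fun_cfun[OF B])
  have Bm: "pos_linear_op (B ^^ m)" by (rule pos_linear_op_funpow[OF B])
  have "(B ^^ (m + n)) one_fun x = (B ^^ m) ?h x" by (simp add: funpow_add)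
  also have "\<dots> \<le> (B ^^ m) (\<lambda>x. ?c * one_fun x) x"
    using abs_le_supnorm[OF K h]
    by (intro pos_linear_op_mono[OF Bm h]) (auto simp: cfun_def one_fun_def abs_le_iff)
  also have "\<dots> = ?c * (B ^^ m) one_fun x" by (simp add: pos_linear_op_scale[OF Bm one_fun_cfun])
  also have "\<dots> \<le> ?c * supnorm ((B ^^ m) one_fun)"
    using abs_le_supnorm[OF K funpow_one_fun_cfun[OF B], of m x] supnorm_nonneg[OF K h]
    by (intro mult_left_mono) auto
  finally show "\<bar>(B ^^ (m + n)) one_fun x\<bar> \<le> supnorm ((B ^^ m) one_fun) * ?c"
    using funpow_one_fun_nonneg[OF B, of "m + n" x] by (simp add: mult.commute)
qed

lemma supnorm_funpow_le_power:
  assumes K: "compact (UNIV :: 'a::topological_space set)"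
    and B: "pos_linear_op (B :: ('a \<Rightarrow> real) \<Rightarrow> ('a \<Rightarrow> real))"
  shows "supnorm ((B ^^ n) one_fun) \<le> supnorm (B one_fun) ^ n"
proof (induction n)
  case 0
  show ?case by (rule supnorm_le) (simp add: one_fun_def)
next
  case (Suc n)
  have "supnorm ((B ^^ (1 + n)) one_fun) \<le> supnorm ((B ^^ 1) one_fun) * supnorm ((B ^^ n) one_fun)"
    by (rule supnorm_funpow_add_le[OF K B])
  also have "\<dots> \<le> supnorm (B one_fun) * supnorm (B one_fun) ^ n"
    using Suc supnorm_nonneg[OF K funpow_one_fun_cfun[OF B, of 1]] by (simp add: mult_left_mono)
  finally show ?case by simp
qed

lemma tendsto_eln_supnorm_funpow:
  fixes B :: "('a::topological_space \<Rightarrow> real) \<Rightarrow> ('a \<Rightarrow> real)"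
  assumes K: "compact (UNIV :: 'a set)" and B: "pos_linear_op B"
  defines "a k \<equiv> supnorm ((B ^^ k) one_fun)"
  shows "(\<lambda>k. eln (a k) / ereal (real k)) \<longlonglongrightarrow> (INF k\<in>{1..}. eln (a k) / ereal (real k))"
proof -
  have a_nonneg: "0 \<le> a k" for k
    unfolding a_def by (rule supnorm_nonneg[OF K funpow_one_fun_cfun[OF B]])
  have a_submult: "a (m + k) \<le> a m * a k" for m k
    unfolding a_def by (rule supnorm_funpow_add_le[OF K B])
  show ?thesis
  proof (cases "\<forall>k. 0 < a k")
    case True
    define \<beta> where "\<beta> k = ln (a k)" for k
    have "\<beta> (m + k) \<le> \<beta> m + \<beta> k" for m k
    proof -
      have pos: "0 < a m" "0 < a k" "0 < a (m + k)" using True by blast+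
      then have "ln (a (m + k)) \<le> ln (a m * a k)" using a_submult[of m k] by simp
      then show ?thesis using pos by (simp add: \<beta>_def ln_mult)
    qed
    then have "(\<lambda>k. ereal (\<beta> k / real k)) \<longlonglongrightarrow> (INF k\<in>{1..}. ereal (\<beta> k / real k))"
      by (rule fekete)
    moreover have eq: "eln (a k) / ereal (real k) = ereal (\<beta> k / real k)" if "k \<ge> 1" for k
      using True that by (simp add: eln_def \<beta>_def not_le)
    moreover have "\<forall>\<^sub>F k in sequentially. eln (a k) / ereal (real k) = ereal (\<beta> k / real k)"
      unfolding eventually_sequentially using eq by blast
    moreover have "(INF k\<in>{1..}. eln (a k) / ereal (real k)) = (INF k\<in>{1..}. ereal (\<beta> k / real k))"
      using eq by (intro INF_cong) auto
    ultimately show ?thesis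
      by (simp add: tendsto_cong)
  next
    case False
    then obtain k where "a k = 0" using a_nonneg by (metis less_eq_real_def)
    then have vanish: "a j = 0" if "j \<ge> k" for j
      using a_submult[of "j - k" k] a_nonneg[of j] that by simp
    then have "\<forall>\<^sub>F j in sequentially. eln (a j) / ereal (real j) = -\<infinity>"
      unfolding eventually_sequentially by (intro exI[of _ "Suc k"]) (simp add: eln_def)
    then have "(\<lambda>j. eln (a j) / ereal (real j)) \<longlonglongrightarrow> -\<infinity>"
      by (simp add: tendsto_cong)
    moreover have "(INF j\<in>{1..}. eln (a j) / ereal (real j)) = -\<infinity>"
      using INF_lower[of "Suc k" "{1..}" "\<lambda>j. eln (a j) / ereal (real j)"] vanish[of "Suc k"]
      by (simp add: eln_def)
    ultimately show ?thesis by simp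
  qed
qed

lemma spec_exp_le:
  assumes K: "compact (UNIV :: 'a::topological_space set)"
    and A: "pos_linear_op (A :: ('a \<Rightarrow> real) \<Rightarrow> ('a \<Rightarrow> real))" and \<phi>: "\<phi> \<in> cfun"
    and n: "n \<ge> 1" and bound: "supnorm ((weighted_op A \<phi> ^^ n) one_fun) \<le> b" and b: "0 < b"
  shows "spec_exp A \<phi> \<le> ereal (ln b / real n)"
proof -
  let ?a = "\<lambda>k. supnorm ((weighted_op A \<phi> ^^ k) one_fun)"
  have "spec_exp A \<phi> = (INF k\<in>{1..}. eln (?a k) / ereal (real k))"
    unfolding spec_exp_def
    by (rule limI[OF tendsto_eln_supnorm_funpow[OF K pos_linear_op_weighted_op[OF A \<phi>]]])
  also have "\<dots> \<le> eln (?a n) / ereal (real n)"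
    using n by (intro INF_lower) simp
  also have "\<dots> \<le> ereal (ln b / real n)"
    using bound b n by (auto simp: eln_def intro!: divide_right_mono)
  finally show ?thesis .
qed

lemma spec_exp_le_of_bounded_weight:
  assumes K: "compact (UNIV :: 'a::topological_space set)"
    and A: "pos_linear_op (A :: ('a \<Rightarrow> real) \<Rightarrow> ('a \<Rightarrow> real))" and \<phi>: "\<phi> \<in> cfun"
    and le: "\<And>x. \<phi> x \<le> c"
  shows "spec_exp A \<phi> \<le> ereal (c + ln (supnorm (A one_fun) + 1))"
proof -
  let ?K = "supnorm (A one_fun) + 1" \<comment> \<open>\<open>+ 1\<close>: the bound must be positive even if \<open>A 1 = 0\<close>\<close>
  have A1: "A one_fun \<in> cfun" by (rule pos_linear_op_cfun[OF A one_fun_cfun])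
  have K_pos: "0 < ?K" using supnorm_nonneg[OF K A1] by linarith
  have "supnorm ((weighted_op A \<phi> ^^ 1) one_fun) \<le> exp c * ?K"
  proof (rule supnorm_le)
    fix x
    have weight: "(\<lambda>x. exp (\<phi> x) * one_fun x) \<in> cfun"
      using \<phi> by (auto simp: cfun_def one_fun_def intro!: continuous_intros)
    have "0 \<le> A (\<lambda>x. exp (\<phi> x) * one_fun x) x"
      by (rule pos_linear_op_nonneg[OF A weight]) (simp add: one_fun_def)
    moreover have "A (\<lambda>x. exp (\<phi> x) * one_fun x) x \<le> A (\<lambda>x. exp c * one_fun x) x"
      using le by (intro pos_linear_op_mono[OF A weight]) (auto simp: cfun_def one_fun_def)
    moreover have "A (\<lambda>x. exp c * one_fun x) x \<le> exp c * ?K"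
      using abs_le_supnorm[OF K A1, of x] by (simp add: pos_linear_op_scale[OF A one_fun_cfun])
    ultimately show "\<bar>(weighted_op A \<phi> ^^ 1) one_fun x\<bar> \<le> exp c * ?K"
      by (simp add: weighted_op_def)
  qed
  then have "spec_exp A \<phi> \<le> ereal (ln (exp c * ?K) / real (1::nat))"
    using K_pos by (intro spec_exp_le[OF K A \<phi>]) auto
  then show ?thesis using K_pos by (simp add: ln_mult)
qed

lemma transfer_operator_pull_out:
  "transfer_operator \<alpha> A \<Longrightarrow> f \<in> cfun \<Longrightarrow> g \<in> cfun \<Longrightarrow> A (\<lambda>x. f (\<alpha> x) * g x) = (\<lambda>x. f x * A g x)"
  by (simp add: transfer_operator_def)

lemma weighted_op_coboundary_funpow:
  assumes T: "transfer_operator \<alpha> A" and g: "g \<in> cfun" and h: "h \<in> cfun"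
  shows "(weighted_op A (\<lambda>x. g (\<alpha> x) - g x) ^^ n) (\<lambda>x. exp (g x) * h x)
    = (\<lambda>x. exp (g x) * (A ^^ n) h x)"
proof (induction n)
  case 0
  then show ?case by simp
next
  case (Suc n)
  have A: "pos_linear_op A" using T by (simp add: transfer_operator_def)
  have exp_g: "(\<lambda>x. exp (g x)) \<in> cfun" using g by (auto simp: cfun_def intro!: continuous_intros)
  have "(weighted_op A (\<lambda>x. g (\<alpha> x) - g x) ^^ Suc n) (\<lambda>x. exp (g x) * h x)
      = A (\<lambda>x. exp (g (\<alpha> x) - g x) * (exp (g x) * (A ^^ n) h x))"
    by (simp add: Suc.IH weighted_op_def)
  also have "\<dots> = A (\<lambda>x. exp (g (\<alpha> x)) * (A ^^ n) h x)"
    by (simp add: exp_diff)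
  also have "\<dots> = (\<lambda>x. exp (g x) * A ((A ^^ n) h) x)"
    by (rule transfer_operator_pull_out[OF T exp_g pos_linear_op_cfun[OF pos_linear_op_funpow[OF A] h]])
  finally show ?case by simp
qed

lemma spec_exp_coboundary_le:
  assumes K: "compact (UNIV :: 'a::topological_space set)"
    and T: "transfer_operator \<alpha> (A :: ('a \<Rightarrow> real) \<Rightarrow> ('a \<Rightarrow> real))"
    and g: "g \<in> cfun" and g\<alpha>: "(\<lambda>x. g (\<alpha> x)) \<in> cfun"
  shows "spec_exp A (\<lambda>x. g (\<alpha> x) - g x) \<le> ereal (ln (supnorm (A one_fun) + 1) + 1)"
proof -
  let ?\<phi> = "\<lambda>x. g (\<alpha> x) - g x"
  let ?K = "supnorm (A one_fun) + 1"
  define G where "G = supnorm g"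
  define n where "n = nat \<lceil>2 * G\<rceil> + 1"
  have A: "pos_linear_op A" using T by (simp add: transfer_operator_def)
  have A1: "A one_fun \<in> cfun" by (rule pos_linear_op_cfun[OF A one_fun_cfun])
  have K_pos: "0 < ?K" using supnorm_nonneg[OF K A1] by linarith
  have \<phi>: "?\<phi> \<in> cfun" using g g\<alpha> by (auto simp: cfun_def intro!: continuous_intros)
  have G: "\<bar>g x\<bar> \<le> G" for x unfolding G_def by (rule abs_le_supnorm[OF K g])
  have n: "n \<ge> 1" "2 * G \<le> real n" unfolding n_def by linarith+
  have "supnorm ((weighted_op A ?\<phi> ^^ n) one_fun) \<le> exp G * (exp G * ?K ^ n)"
  proof (rule supnorm_le)
    fix x
    have An: "pos_linear_op (A ^^ n)" by (rule pos_linear_op_funpow[OF A])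
    have h: "(\<lambda>x. exp (- g x)) \<in> cfun" using g by (auto simp: cfun_def intro!: continuous_intros)
    have one: "one_fun = (\<lambda>x. exp (g x) * exp (- g x))" by (simp add: one_fun_def fun_eq_iff exp_minus)
    have split: "(weighted_op A ?\<phi> ^^ n) one_fun x = exp (g x) * (A ^^ n) (\<lambda>x. exp (- g x)) x"
      unfolding one by (simp only: weighted_op_coboundary_funpow[OF T g h])
    have "(A ^^ n) (\<lambda>x. exp (- g x)) x \<le> (A ^^ n) (\<lambda>x. exp G * one_fun x) x"
      using G by (intro pos_linear_op_mono[OF An h]) (auto simp: cfun_def one_fun_def abs_le_iff)
    also have "\<dots> = exp G * (A ^^ n) one_fun x" by (simp add: pos_linear_op_scale[OF An one_fun_cfun])
    also have "\<dots> \<le> exp G * ?K ^ n"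
    proof -
      have "(A ^^ n) one_fun x \<le> supnorm ((A ^^ n) one_fun)"
        using abs_le_supnorm[OF K funpow_one_fun_cfun[OF A], of n x] by simp
      also have "\<dots> \<le> supnorm (A one_fun) ^ n" by (rule supnorm_funpow_le_power[OF K A])
      also have "\<dots> \<le> ?K ^ n" using supnorm_nonneg[OF K A1] by (intro power_mono) auto
      finally show ?thesis by simp
    qed
    finally have upper: "(A ^^ n) (\<lambda>x. exp (- g x)) x \<le> exp G * ?K ^ n" .
    have lower: "0 \<le> (A ^^ n) (\<lambda>x. exp (- g x)) x" by (rule pos_linear_op_nonneg[OF An h]) simp
    have "exp (g x) \<le> exp G" using G[of x] by simp
    then show "\<bar>(weighted_op A ?\<phi> ^^ n) one_fun x\<bar> \<le> exp G * (exp G * ?K ^ n)"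
      unfolding split using upper lower by (simp add: abs_mult mult_mono)
  qed
  then have "spec_exp A ?\<phi> \<le> ereal (ln (exp G * (exp G * ?K ^ n)) / real n)"
    using K_pos by (intro spec_exp_le[OF K A \<phi> n(1)]) auto
  also have "ln (exp G * (exp G * ?K ^ n)) / real n = 2 * G / real n + ln ?K"
    using K_pos n(1) by (simp add: ln_mult ln_realpow field_simps)
  also have "2 * G / real n \<le> 1" using n by (simp add: divide_le_eq)
  finally show ?thesis by (simp add: add.commute)
qed

lemma ereal_diff_less_of_le: "x \<le> ereal s \<Longrightarrow> s - m < r \<Longrightarrow> x - ereal m < ereal r"
  by (cases x) auto

lemma linear_functional_add:
  "linear_functional \<mu> \<Longrightarrow> f \<in> cfun \<Longrightarrow> g \<in> cfun \<Longrightarrow> \<mu> (\<lambda>x. f x + g x) = \<mu> f + \<mu> g"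
  by (simp add: linear_functional_def)

lemma linear_functional_scale: "linear_functional \<mu> \<Longrightarrow> f \<in> cfun \<Longrightarrow> \<mu> (\<lambda>x. c * f x) = c * \<mu> f"
  by (simp add: linear_functional_def)

lemma small_gap_if_not_positive:
  assumes K: "compact (UNIV :: 'a::topological_space set)"
    and A: "pos_linear_op (A :: ('a \<Rightarrow> real) \<Rightarrow> ('a \<Rightarrow> real))" and \<mu>: "linear_functional \<mu>"
    and f: "f \<in> cfun" "\<And>x. 0 \<le> f x" "\<mu> f < 0"
  shows "\<exists>\<phi>\<in>cfun. spec_exp A \<phi> - ereal (\<mu> \<phi>) < ereal r"
proof -
  define L where "L = ln (supnorm (A one_fun) + 1)"
  define t where "t = (\<bar>L - r\<bar> + 1) / \<mu> f"
  have t: "t \<le> 0" using f(3) by (simp add: t_def divide_nonneg_neg)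
  have \<phi>: "(\<lambda>x. t * f x) \<in> cfun" using f(1) by (auto simp: cfun_def intro!: continuous_intros)
  have "spec_exp A (\<lambda>x. t * f x) \<le> ereal (0 + L)"
    unfolding L_def using t f(2) by (intro spec_exp_le_of_bounded_weight[OF K A \<phi>] mult_nonpos_nonneg)
  moreover have "\<mu> (\<lambda>x. t * f x) = t * \<mu> f" by (rule linear_functional_scale[OF \<mu> f(1)])
  moreover have "t * \<mu> f = \<bar>L - r\<bar> + 1" using f(3) by (simp add: t_def)
  ultimately show ?thesis
    using \<phi> by (intro bexI[of _ "\<lambda>x. t * f x"] ereal_diff_less_of_le) auto
qed

lemma small_gap_if_not_normalized:
  assumes K: "compact (UNIV :: 'a::topological_space set)"
    and A: "pos_linear_op (A :: ('a \<Rightarrow> real) \<Rightarrow> ('a \<Rightarrow> real))" and \<mu>: "linear_functional \<mu>"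
    and not_one: "\<mu> one_fun \<noteq> 1"
  shows "\<exists>\<phi>\<in>cfun. spec_exp A \<phi> - ereal (\<mu> \<phi>) < ereal r"
proof -
  define L where "L = ln (supnorm (A one_fun) + 1)"
  define c where "c = (r - L - 1) / (1 - \<mu> one_fun)"
  have \<phi>: "(\<lambda>x. c * one_fun x) \<in> cfun" by (simp add: cfun_def one_fun_def)
  have "spec_exp A (\<lambda>x. c * one_fun x) \<le> ereal (c + L)"
    unfolding L_def by (rule spec_exp_le_of_bounded_weight[OF K A \<phi>]) (simp add: one_fun_def)
  moreover have "\<mu> (\<lambda>x. c * one_fun x) = c * \<mu> one_fun"
    by (rule linear_functional_scale[OF \<mu> one_fun_cfun])
  moreover have "c + L - c * \<mu> one_fun = L + c * (1 - \<mu> one_fun)" by (simp add: algebra_simps)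
  moreover have "c * (1 - \<mu> one_fun) = r - L - 1" using not_one by (simp add: c_def)
  ultimately show ?thesis
    using \<phi> by (intro bexI[of _ "\<lambda>x. c * one_fun x"] ereal_diff_less_of_le) auto
qed

lemma small_gap_if_not_invariant:
  assumes K: "compact (UNIV :: 'a::topological_space set)" and \<alpha>: "continuous_on UNIV \<alpha>"
    and T: "transfer_operator \<alpha> (A :: ('a \<Rightarrow> real) \<Rightarrow> ('a \<Rightarrow> real))" and \<mu>: "linear_functional \<mu>"
    and f: "f \<in> cfun" "\<mu> (\<lambda>x. f (\<alpha> x)) \<noteq> \<mu> f"
  shows "\<exists>\<phi>\<in>cfun. spec_exp A \<phi> - ereal (\<mu> \<phi>) < ereal r"
proof -
  define L where "L = ln (supnorm (A one_fun) + 1)"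
  define t where "t = (L + 2 - r) / (\<mu> (\<lambda>x. f (\<alpha> x)) - \<mu> f)"
  define g where "g = (\<lambda>x. t * f x)"
  have f\<alpha>: "(\<lambda>x. f (\<alpha> x)) \<in> cfun"
    using f(1) \<alpha> by (auto simp: cfun_def intro: continuous_on_compose2[OF _ _ subset_UNIV])
  have g: "g \<in> cfun" and g\<alpha>: "(\<lambda>x. g (\<alpha> x)) \<in> cfun"
    using f(1) f\<alpha> by (auto simp: g_def cfun_def intro!: continuous_intros)
  have \<phi>: "(\<lambda>x. g (\<alpha> x) - g x) \<in> cfun" using g g\<alpha> by (auto simp: cfun_def intro!: continuous_intros)
  have "spec_exp A (\<lambda>x. g (\<alpha> x) - g x) \<le> ereal (L + 1)"
    unfolding L_def by (rule spec_exp_coboundary_le[OF K T g g\<alpha>])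
  moreover have "\<mu> (\<lambda>x. g (\<alpha> x) - g x) = t * (\<mu> (\<lambda>x. f (\<alpha> x)) - \<mu> f)"
  proof -
    have "\<mu> (\<lambda>x. g (\<alpha> x) - g x) = \<mu> (\<lambda>x. t * f (\<alpha> x) + (- t) * f x)"
      by (rule arg_cong[where f = \<mu>]) (simp add: g_def fun_eq_iff)
    also have "\<dots> = \<mu> (\<lambda>x. t * f (\<alpha> x)) + \<mu> (\<lambda>x. (- t) * f x)"
      using f(1) f\<alpha> by (intro linear_functional_add[OF \<mu>]) (auto simp: cfun_def intro!: continuous_intros)
    also have "\<dots> = t * (\<mu> (\<lambda>x. f (\<alpha> x)) - \<mu> f)"
      unfolding linear_functional_scale[OF \<mu> f(1)] linear_functional_scale[OF \<mu> f\<alpha>]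
      by (simp add: algebra_simps)
    finally show ?thesis .
  qed
  moreover have "t * (\<mu> (\<lambda>x. f (\<alpha> x)) - \<mu> f) = L + 2 - r" using f(2) by (simp add: t_def)
  ultimately show ?thesis
    using \<phi> by (intro bexI[of _ "\<lambda>x. g (\<alpha> x) - g x"] ereal_diff_less_of_le) auto
qed

lemma ereal_INF_eq_MInfty:
  fixes F :: "'b \<Rightarrow> ereal"
  assumes "\<And>r. \<exists>x\<in>S. F x < ereal r"
  shows "(INF x\<in>S. F x) = -\<infinity>"
  using assms by (meson INF_lower2 ereal_bot less_eq_ereal_def)

theorem theorem1p10:
  fixes \<alpha> :: "'a::t2_space \<Rightarrow> 'a"
    and A :: "('a \<Rightarrow> real) \<Rightarrow> ('a \<Rightarrow> real)"
    and \<mu> :: "('a \<Rightarrow> real) \<Rightarrow> real"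
  assumes "compact (UNIV :: 'a set)"
    and "continuous_on UNIV \<alpha>"
    and "transfer_operator \<alpha> A"
    and "linear_functional \<mu>"
    and "\<mu> \<notin> M_delta \<alpha>"
  shows "(INF \<phi>\<in>cfun. spec_exp A \<phi> - ereal (\<mu> \<phi>)) = -\<infinity>"
proof (rule ereal_INF_eq_MInfty)
  fix r
  have A: "pos_linear_op A" using assms(3) by (simp add: transfer_operator_def)
  from assms(4,5) consider
      (not_positive) f where "f \<in> cfun" "\<And>x. 0 \<le> f x" "\<mu> f < 0"
    | (not_normalized) "\<mu> one_fun \<noteq> 1"
    | (not_invariant) f where "f \<in> cfun" "\<mu> (\<lambda>x. f (\<alpha> x)) \<noteq> \<mu> f"
    unfolding M_delta_def by (auto simp: not_le)
  then show "\<exists>\<phi>\<in>cfun. spec_exp A \<phi> - ereal (\<mu> \<phi>) < ereal r"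
  proof cases
    case not_positive
    then show ?thesis by (rule small_gap_if_not_positive[OF assms(1) A assms(4)])
  next
    case not_normalized
    then show ?thesis by (rule small_gap_if_not_normalized[OF assms(1) A assms(4)])
  next
    case not_invariant
    then show ?thesis by (rule small_gap_if_not_invariant[OF assms(1-4)])
  qed
qed

end
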